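(* Consider a cryptomining facility with two machine types of capacities $c_1^M,c_2^M>0$ and per-unit mining rewards $r_1<r_2$, participating in a reg-up program with committed capacity $c_1\ge0$ and price $p_1$ and a reg-down program with committed capacity $c_2\ge 0$ and price $p_2$, with $c_1+c_2\le c_1^M+c_2^M$. For deployment ratios $(\epsilon_1,\epsilon_2)\in[0,1]^2$ let $L=\epsilon_1c_1+(1-\epsilon_2)c_2$ and $$\mathrm{cost}_{reg}(\epsilon,c)=\begin{cases} r_1L-p_1c_1-p_2c_2 & \text{if } L\le c_1^M,\\ r_2L+(r_1-r_2)c_1^M-p_1c_1-p_2c_2 & \text{otherwise.}\end{cases}$$ Let $\theta\in[0,1]$, $\lambda_1,\lambda_2>0$, and suppose $(\epsilon_1,\epsilon_2)$ has joint density $$\theta\,\delta(\epsilon_1)\frac{\lambda_2e^{-\lambda_2\epsilon_2}}{1-e^{-\lambda_2}}+(1-\theta)\,\delta(\epsilon_2)\frac{\lambda_1e^{-\lambda_1\epsilon_1}}{1-e^{-\lambda_1}}\qquad\text{on }[0,1]^2.$$ For $j=1,2$ write $\bar\epsilon_j=\frac{1-(\lambda_j+1)e^{-\lambda_j}}{\lambda_j(1-e^{-\lambda_j})}$. Then $$\mathbb{E}_\epsilon[\mathrm{cost}_{reg}(\epsilon,c)]=\begin{cases}Q_1 & \text{if } c_1+c_2<c_1^M,\\ Q_2 & \text{if } c_2\ge c_1^M,\\ Q_3 & \text{otherwise,}\end{cases}$$ where $$Q_1=c_1\big[(1-\theta)r_1\bar\epsilon_1-p_1\big]+c_2\big[r_1(1-\theta\bar\epsilon_2)-p_2\big],$$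 $$Q_2=Q_1+(r_1-r_2)\Big(\theta\,\frac{\lambda_2c_1^M+c_2\big(1-\lambda_2-e^{-\lambda_2(1-c_1^M/c_2)}\big)}{\lambda_2(1-e^{-\lambda_2})}+(1-\theta)\big[c_1^M-c_2-c_1\bar\epsilon_1\big]\Big),$$ $$Q_3=Q_1+(r_1-r_2)(1-\theta)\,\frac{\lambda_1(c_2-c_1^M)+c_1\big(1+\lambda_1-e^{-\lambda_1(c_1^M-c_1-c_2)/c_1}\big)}{\lambda_1(e^{\lambda_1}-1)}.$$
   Context: $\epsilon_1$ is the deployment ratio of reg-up (load reduction $\epsilon_1c_1$) and $\epsilon_2$ that of reg-down; a facility committing $c_2$ to reg-down lowers its operating point by $c_2$ and, when deployed with ratio $\epsilon_2$, its load reduction is $(1-\epsilon_2)c_2$. The quantities $\bar\epsilon_j$ are the means of the truncated exponential distributions with parameters $\lambda_j$ on $[0,1]$ (written $\mathbb{E}[\epsilon_j]$ in the paper). $\delta$ is the Dirac delta: with probability $\theta$ only reg-down is deployed ($\epsilon_1=0$), otherwise only reg-up ($\epsilon_2=0$). *)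

theory Defs
  imports "HOL-Analysis.Analysis"
begin

definition cost_reg ::
  "real \<Rightarrow> real \<Rightarrow> real \<Rightarrow> real \<Rightarrow> real \<Rightarrow> real \<Rightarrow> real \<Rightarrow> real \<Rightarrow> real \<Rightarrow> real" where
  "cost_reg r1 r2 p1 p2 cM1 c1 c2 e1 e2 =
     (let L = e1 * c1 + (1 - e2) * c2 in
      if L \<le> cM1 then r1 * L - p1 * c1 - p2 * c2
      else r2 * L + (r1 - r2) * cM1 - p1 * c1 - p2 * c2)"

definition trunc_exp_dens :: "real \<Rightarrow> real \<Rightarrow> real" where
  "trunc_exp_dens lam x = lam * exp (- lam * x) / (1 - exp (- lam))"

text \<open>Mean of the truncated exponential distribution (closed form given in the paper).\<close>
definition eps_bar :: "real \<Rightarrow> real" where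
  "eps_bar lam = (1 - (lam + 1) * exp (- lam)) / (lam * (1 - exp (- lam)))"

text \<open>Expectation of a function g(e1,e2) under the joint density
  theta * delta(e1) * f_{lam2}(e2) + (1 - theta) * delta(e2) * f_{lam1}(e1) on [0,1]^2:
  integrating out the Dirac deltas.\<close>
definition mix_expect ::
  "real \<Rightarrow> real \<Rightarrow> real \<Rightarrow> (real \<Rightarrow> real \<Rightarrow> real) \<Rightarrow> real" where
  "mix_expect theta lam1 lam2 g =
     theta * (LINT e2:{0..1}|lborel. g 0 e2 * trunc_exp_dens lam2 e2)
     + (1 - theta) * (LINT e1:{0..1}|lborel. g e1 0 * trunc_exp_dens lam1 e1)"

end

theory Submission
  imports Defs
begin

(* Write L = e1 c1 + (1 - e2) c2 and K = p1 c1 + p2 c2. Then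
   cost_reg = r1 L - K + (r2 - r1) max (L - cM1) 0.  Under the mixture one of the two ratios is 0,
   and along either axis L is affine in the other ratio, so the expectation is the r1-linear part Q1
   (computed from the means eps_bar) plus (r2 - r1) times the expected "hinge" max (L - cM1) 0.
   The hinge is affine on the subinterval where L exceeds cM1 and zero elsewhere, and affine
   functions integrate against the truncated exponential density in closed form via the
   antiderivative -(A + B x + B/lam) exp (-lam x) / (1 - exp (-lam)).  The three cases of the
   theorem are the three configurations of these subintervals. *)

definition trunc_exp_primitive :: "real \<Rightarrow> real \<Rightarrow> real \<Rightarrow> real \<Rightarrow> real" where
  "trunc_exp_primitive lam A B x = - (A + B * x + B / lam) * exp (- lam * x) / (1 - exp (- lam))"

lemma has_integral_affine_trunc_exp_dens:
  assumes "lam \<noteq> 0" and "s \<le> t"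
  shows "((\<lambda>x. (A + B * x) * trunc_exp_dens lam x) has_integral
           trunc_exp_primitive lam A B t - trunc_exp_primitive lam A B s) {s..t}"
proof (rule fundamental_theorem_of_calculus[OF \<open>s \<le> t\<close>])
  fix x
  have "1 - exp (- lam) \<noteq> 0"
    using assms(1) by simp
  then have "(trunc_exp_primitive lam A B has_real_derivative (A + B * x) * trunc_exp_dens lam x) (at x)"
    unfolding trunc_exp_primitive_def trunc_exp_dens_def
    by (auto intro!: derivative_eq_intros) (simp add: field_simps assms(1))
  then show "(trunc_exp_primitive lam A B has_vector_derivative (A + B * x) * trunc_exp_dens lam x)
      (at x within {s..t})"
    by (simp add: has_real_derivative_iff_has_vector_derivative has_vector_derivative_at_within)
qed

lemma trunc_exp_primitive_01:
  assumes "lam \<noteq> 0"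
  shows "trunc_exp_primitive lam A B 1 - trunc_exp_primitive lam A B 0 = A + B * eps_bar lam"
proof -
  have "1 - exp (- lam) \<noteq> 0"
    using assms by simp
  with assms show ?thesis
    unfolding trunc_exp_primitive_def eps_bar_def by (simp add: divide_simps) (simp add: algebra_simps)
qed

lemma trunc_exp_primitive_root:
  assumes "A + B * x = 0"
  shows "trunc_exp_primitive lam A B x = - B / lam * exp (- lam * x) / (1 - exp (- lam))"
  unfolding trunc_exp_primitive_def using assms by simp

lemma has_integral_hinge_trunc_exp_dens:
  assumes "lam \<noteq> 0" and "0 \<le> s" and "s \<le> t" and "t \<le> 1"
    and above: "\<And>x. s \<le> x \<Longrightarrow> x \<le> t \<Longrightarrow> m \<le> \<alpha> + \<beta> * x"
    and below: "\<And>x. 0 \<le> x \<Longrightarrow> x \<le> 1 \<Longrightarrow> x < s \<or> t < x \<Longrightarrow> \<alpha> + \<beta> * x \<le> m"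
  shows "((\<lambda>x. max (\<alpha> + \<beta> * x - m) 0 * trunc_exp_dens lam x) has_integral
           trunc_exp_primitive lam (\<alpha> - m) \<beta> t - trunc_exp_primitive lam (\<alpha> - m) \<beta> s) {0..1}"
proof -
  let ?f = "\<lambda>x. max (\<alpha> + \<beta> * x - m) 0 * trunc_exp_dens lam x"
  have outside: "?f x = 0" if "0 \<le> x" "x \<le> 1" "x < s \<or> t < x" for x
    using below[OF that] by simp
  have left: "(?f has_integral 0) {0..s}"
    by (rule has_integral_spike_finite[of "{s}" _ _ "\<lambda>_. 0"]) (use assms outside in auto)
  have middle: "(?f has_integral
      trunc_exp_primitive lam (\<alpha> - m) \<beta> t - trunc_exp_primitive lam (\<alpha> - m) \<beta> s) {s..t}"
    by (rule has_integral_eq[OF _ has_integral_affine_trunc_exp_dens[OF \<open>lam \<noteq> 0\<close> \<open>s \<le> t\<close>]])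
      (auto dest: above)
  have right: "(?f has_integral 0) {t..1}"
    by (rule has_integral_spike_finite[of "{t}" _ _ "\<lambda>_. 0"]) (use assms outside in auto)
  from has_integral_combine[OF _ _ has_integral_combine[OF _ _ left middle] right] assms(2-4)
  show ?thesis
    by simp
qed

lemma has_integral_hinge_trunc_exp_dens_nonpos:
  assumes "\<And>x. 0 \<le> x \<Longrightarrow> x \<le> 1 \<Longrightarrow> \<alpha> + \<beta> * x \<le> m"
  shows "((\<lambda>x. max (\<alpha> + \<beta> * x - m) 0 * trunc_exp_dens lam x) has_integral 0) {0..1}"
  by (rule has_integral_eq[OF _ has_integral_0]) (simp add: assms)

lemma has_integral_hinge_trunc_exp_dens_nonneg:
  assumes "lam \<noteq> 0" and "\<And>x. 0 \<le> x \<Longrightarrow> x \<le> 1 \<Longrightarrow> m \<le> \<alpha> + \<beta> * x"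
  shows "((\<lambda>x. max (\<alpha> + \<beta> * x - m) 0 * trunc_exp_dens lam x) has_integral
           \<alpha> - m + \<beta> * eps_bar lam) {0..1}"
  using has_integral_hinge_trunc_exp_dens[OF \<open>lam \<noteq> 0\<close>, of 0 1 m \<alpha> \<beta>] assms
  by (simp add: trunc_exp_primitive_01)

lemma has_integral_hinge_trunc_exp_dens_decreasing:
  assumes "lam \<noteq> 0" and "0 < m" and "m \<le> c"
  shows "((\<lambda>x. max (c + - c * x - m) 0 * trunc_exp_dens lam x) has_integral
           - (lam * m + c * (1 - lam - exp (- lam * (1 - m / c)))) / (lam * (1 - exp (- lam)))) {0..1}"
proof -
  define a where "a = 1 - m / c"
  have "c > 0" and "0 \<le> a" and "a \<le> 1" and root: "c - m + - c * a = 0"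
    using assms by (auto simp: a_def field_simps)
  have "((\<lambda>x. max (c + - c * x - m) 0 * trunc_exp_dens lam x) has_integral
      trunc_exp_primitive lam (c - m) (- c) a - trunc_exp_primitive lam (c - m) (- c) 0) {0..1}"
  proof (rule has_integral_hinge_trunc_exp_dens[OF \<open>lam \<noteq> 0\<close> order_refl \<open>0 \<le> a\<close> \<open>a \<le> 1\<close>])
    show "m \<le> c + - c * x" if "0 \<le> x" "x \<le> a" for x
      using mult_left_mono[OF \<open>x \<le> a\<close>, of c] \<open>c > 0\<close> root by linarith
    show "c + - c * x \<le> m" if "0 \<le> x" "x \<le> 1" "x < 0 \<or> a < x" for x
      using mult_strict_left_mono[of a x c] \<open>c > 0\<close> root that by linarith
  qed
  moreover have "trunc_exp_primitive lam (c - m) (- c) a - trunc_exp_primitive lam (c - m) (- c) 0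
      = - (lam * m + c * (1 - lam - exp (- lam * a))) / (lam * (1 - exp (- lam)))"
  proof -
    have "1 - exp (- lam) \<noteq> 0"
      using assms by simp
    then show ?thesis
      unfolding trunc_exp_primitive_root[OF root] using assms
      by (simp add: trunc_exp_primitive_def divide_simps) (simp add: algebra_simps)
  qed
  ultimately show ?thesis
    by (simp add: a_def)
qed

lemma has_integral_hinge_trunc_exp_dens_increasing:
  assumes "lam \<noteq> 0" and "0 < c" and "d \<le> m" and "m \<le> d + c"
  shows "((\<lambda>x. max (d + c * x - m) 0 * trunc_exp_dens lam x) has_integral
           - (lam * (d - m) + c * (1 + lam - exp (- lam * (m - c - d) / c))) / (lam * (exp lam - 1))) {0..1}"
proof -
  define b where "b = (m - d) / c"
  have "0 \<le> b" and "b \<le> 1" and root: "d - m + c * b = 0"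
    using assms by (auto simp: b_def field_simps)
  have "((\<lambda>x. max (d + c * x - m) 0 * trunc_exp_dens lam x) has_integral
      trunc_exp_primitive lam (d - m) c 1 - trunc_exp_primitive lam (d - m) c b) {0..1}"
  proof (rule has_integral_hinge_trunc_exp_dens[OF \<open>lam \<noteq> 0\<close> \<open>0 \<le> b\<close> \<open>b \<le> 1\<close> order_refl])
    show "m \<le> d + c * x" if "b \<le> x" "x \<le> 1" for x
      using mult_left_mono[OF \<open>b \<le> x\<close>, of c] \<open>c > 0\<close> root by linarith
    show "d + c * x \<le> m" if "0 \<le> x" "x \<le> 1" "x < b \<or> 1 < x" for x
      using mult_strict_left_mono[of x b c] \<open>c > 0\<close> root that by linarith
  qed
  moreover have "trunc_exp_primitive lam (d - m) c 1 - trunc_exp_primitive lam (d - m) c b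
      = - (lam * (d - m) + c * (1 + lam - exp lam * exp (- lam * b))) / (lam * (exp lam - 1))"
  proof -
    have "exp lam \<noteq> 1"
      using assms by simp
    then show ?thesis
      unfolding trunc_exp_primitive_root[OF root] using assms
      by (simp add: trunc_exp_primitive_def exp_minus divide_simps) (simp add: algebra_simps)
  qed
  moreover have "exp lam * exp (- lam * b) = exp (- lam * (m - c - d) / c)"
    using \<open>c > 0\<close> by (simp add: b_def mult_exp_exp field_simps)
  ultimately show ?thesis
    by simp
qed

lemma set_borel_integral_eq_has_integral:
  fixes f :: "real \<Rightarrow> real"
  assumes "continuous_on {a..b} f" and "(f has_integral I) {a..b}"
  shows "(LINT x:{a..b}|lborel. f x) = I"
  using set_borel_integral_eq_integral(2)[OF borel_integrable_atLeastAtMost'[OF assms(1)]] assms(2)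
  by (simp add: integral_unique)

lemma continuous_on_trunc_exp_dens:
  assumes "lam \<noteq> 0"
  shows "continuous_on S (trunc_exp_dens lam)"
proof -
  have "1 - exp (- lam) \<noteq> 0"
    using assms by simp
  then show ?thesis
    unfolding trunc_exp_dens_def by (intro continuous_intros) auto
qed

lemma set_integral_hinge_cost_trunc_exp_dens:
  assumes "lam \<noteq> 0"
    and hinge: "((\<lambda>x. max (\<alpha> + \<beta> * x - m) 0 * trunc_exp_dens lam x) has_integral X) {0..1}"
  shows "(LINT x:{0..1}|lborel.
            (r1 * (\<alpha> + \<beta> * x) - K + (r2 - r1) * max (\<alpha> + \<beta> * x - m) 0) * trunc_exp_dens lam x)
         = r1 * (\<alpha> + \<beta> * eps_bar lam) - K + (r2 - r1) * X"
proof (rule set_borel_integral_eq_has_integral)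
  show "continuous_on {0..1} (\<lambda>x.
      (r1 * (\<alpha> + \<beta> * x) - K + (r2 - r1) * max (\<alpha> + \<beta> * x - m) 0) * trunc_exp_dens lam x)"
    by (intro continuous_intros continuous_on_trunc_exp_dens assms(1))
  have "((\<lambda>x. (r1 * \<alpha> - K + r1 * \<beta> * x) * trunc_exp_dens lam x) has_integral
      r1 * \<alpha> - K + r1 * \<beta> * eps_bar lam) {0..1}"
    using has_integral_affine_trunc_exp_dens[OF assms(1), of 0 1 "r1 * \<alpha> - K" "r1 * \<beta>"]
    by (simp add: trunc_exp_primitive_01[OF assms(1)])
  from has_integral_add[OF this has_integral_mult_right[OF hinge, of "r2 - r1"]]
  show "((\<lambda>x. (r1 * (\<alpha> + \<beta> * x) - K + (r2 - r1) * max (\<alpha> + \<beta> * x - m) 0) * trunc_exp_dens lam x)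
      has_integral r1 * (\<alpha> + \<beta> * eps_bar lam) - K + (r2 - r1) * X) {0..1}"
    by (simp add: algebra_simps)
qed

lemma cost_reg_eq_hinge:
  "cost_reg r1 r2 p1 p2 cM1 c1 c2 e1 e2 =
     r1 * (e1 * c1 + (1 - e2) * c2) - (p1 * c1 + p2 * c2)
     + (r2 - r1) * max (e1 * c1 + (1 - e2) * c2 - cM1) 0"
  unfolding cost_reg_def Let_def by (simp add: max_def algebra_simps)

lemma mix_expect_cost_reg:
  assumes "lam1 \<noteq> 0" and "lam2 \<noteq> 0"
    and X1: "((\<lambda>x. max (c2 + c1 * x - cM1) 0 * trunc_exp_dens lam1 x) has_integral X1) {0..1}"
    and X2: "((\<lambda>x. max (c2 + - c2 * x - cM1) 0 * trunc_exp_dens lam2 x) has_integral X2) {0..1}"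
  shows "mix_expect theta lam1 lam2 (cost_reg r1 r2 p1 p2 cM1 c1 c2) =
    c1 * ((1 - theta) * r1 * eps_bar lam1 - p1) + c2 * (r1 * (1 - theta * eps_bar lam2) - p2)
    + (r2 - r1) * (theta * X2 + (1 - theta) * X1)"
proof -
  let ?K = "p1 * c1 + p2 * c2"
  have on_eps1_zero: "cost_reg r1 r2 p1 p2 cM1 c1 c2 0 x
      = r1 * (c2 + - c2 * x) - ?K + (r2 - r1) * max (c2 + - c2 * x - cM1) 0"
    and on_eps2_zero: "cost_reg r1 r2 p1 p2 cM1 c1 c2 x 0
      = r1 * (c2 + c1 * x) - ?K + (r2 - r1) * max (c2 + c1 * x - cM1) 0" for x
    by (simp_all add: cost_reg_eq_hinge algebra_simps)
  show ?thesis
    unfolding mix_expect_def on_eps1_zero on_eps2_zero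
      set_integral_hinge_cost_trunc_exp_dens[OF assms(1) X1]
      set_integral_hinge_cost_trunc_exp_dens[OF assms(2) X2]
    by (simp add: algebra_simps)
qed

theorem theorem3:
  fixes cM1 cM2 r1 r2 p1 p2 c1 c2 theta lam1 lam2 :: real
  assumes "cM1 > 0" and "cM2 > 0" and "r1 < r2"
    and "c1 \<ge> 0" and "c2 \<ge> 0" and "c1 + c2 \<le> cM1 + cM2"
    and "0 \<le> theta" and "theta \<le> 1" and "lam1 > 0" and "lam2 > 0"
  shows "mix_expect theta lam1 lam2 (cost_reg r1 r2 p1 p2 cM1 c1 c2) =
    (let Q1 = c1 * ((1 - theta) * r1 * eps_bar lam1 - p1)
              + c2 * (r1 * (1 - theta * eps_bar lam2) - p2);
         Q2 = Q1 + (r1 - r2) *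
              (theta * (lam2 * cM1 + c2 * (1 - lam2 - exp (- lam2 * (1 - cM1 / c2))))
                 / (lam2 * (1 - exp (- lam2)))
               + (1 - theta) * (cM1 - c2 - c1 * eps_bar lam1));
         Q3 = Q1 + (r1 - r2) * (1 - theta) *
              (lam1 * (c2 - cM1) + c1 * (1 + lam1 - exp (- lam1 * (cM1 - c1 - c2) / c1)))
                 / (lam1 * (exp lam1 - 1))
     in if c1 + c2 < cM1 then Q1 else if c2 \<ge> cM1 then Q2 else Q3)"
proof -
  have "lam1 \<noteq> 0" and "lam2 \<noteq> 0"
    using assms by auto
  note expect = mix_expect_cost_reg[OF this, of c2 c1 cM1 _ _ theta r1 r2 p1 p2]
  have line_bounds: "c2 \<le> c2 + c1 * x" "c2 + c1 * x \<le> c1 + c2" "c2 + - c2 * x \<le> c2"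
    if "0 \<le> x" "x \<le> 1" for x
    using that assms by (simp_all add: mult_left_le)
  consider (low) "c1 + c2 < cM1" | (high_c2) "\<not> c1 + c2 < cM1" "cM1 \<le> c2"
    | (between) "\<not> c1 + c2 < cM1" "c2 < cM1"
    by linarith
  then show ?thesis
  proof cases
    case low
    have "((\<lambda>x. max (c2 + c1 * x - cM1) 0 * trunc_exp_dens lam1 x) has_integral 0) {0..1}"
      by (rule has_integral_hinge_trunc_exp_dens_nonpos) (use low line_bounds in fastforce)
    moreover have "((\<lambda>x. max (c2 + - c2 * x - cM1) 0 * trunc_exp_dens lam2 x) has_integral 0) {0..1}"
      by (rule has_integral_hinge_trunc_exp_dens_nonpos) (use low line_bounds in fastforce)
    ultimately show ?thesis
      using expect low
      by (simp add: Let_def)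
  next
    case high_c2
    have "((\<lambda>x. max (c2 + c1 * x - cM1) 0 * trunc_exp_dens lam1 x) has_integral
        c2 - cM1 + c1 * eps_bar lam1) {0..1}"
      by (rule has_integral_hinge_trunc_exp_dens_nonneg[OF \<open>lam1 \<noteq> 0\<close>])
        (use high_c2 line_bounds in fastforce)
    from expect[OF this has_integral_hinge_trunc_exp_dens_decreasing[OF \<open>lam2 \<noteq> 0\<close> \<open>cM1 > 0\<close>]]
      high_c2
    show ?thesis
      by (simp add: Let_def algebra_simps)
  next
    case between
    have "((\<lambda>x. max (c2 + - c2 * x - cM1) 0 * trunc_exp_dens lam2 x) has_integral 0) {0..1}"
      by (rule has_integral_hinge_trunc_exp_dens_nonpos) (use between line_bounds in fastforce)
    from expect[OF has_integral_hinge_trunc_exp_dens_increasing[OF \<open>lam1 \<noteq> 0\<close>] this] between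
    show ?thesis
      by (simp add: Let_def algebra_simps)
  qed
qed

end
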